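(* For a $*$-ring $R$ the following are equivalent: (1) $R$ is a generalized p.q.-Baer $*$-ring; (2) $R$ has a unity, and for every $x\in R$ there exist a central projection $e$ and $n\in\mathbb N$ such that $r_R((xR)^n)=r_R((eR)^n)$.
   Context: A $*$-ring is a ring with an involution; a projection is $e$ with $e=e^*=e^2$. $r_R(S)=\{a\in R: sa=0\ \forall s\in S\}$. $R$ is a generalized p.q.-Baer $*$-ring if for every $x\in R$ there are $n\in\mathbb N$ and a projection $e$ with $r_R((xR)^n)=eR$ (equivalently, for every principal ideal $I$, $r_R(I^n)=eR$ for some $n$ and projection $e$). *)

theory Defs
  imports Main
begin

text \<open>Rings are associative, not necessarily unital (type class ring).
  An involution on a ring.\<close>
definition is_involution :: "('a::ring \<Rightarrow> 'a) \<Rightarrow> bool" where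
  "is_involution star \<longleftrightarrow>
     (\<forall>x y. star (x + y) = star x + star y) \<and>
     (\<forall>x y. star (x * y) = star y * star x) \<and>
     (\<forall>x. star (star x) = x)"

definition is_projection :: "('a::ring \<Rightarrow> 'a) \<Rightarrow> 'a \<Rightarrow> bool" where
  "is_projection star e \<longleftrightarrow> e = star e \<and> e * e = e"

definition is_central :: "'a::ring \<Rightarrow> bool" where
  "is_central e \<longleftrightarrow> (\<forall>y. e * y = y * e)"

definition has_unity :: "'a::ring itself \<Rightarrow> bool" where
  "has_unity _ \<longleftrightarrow> (\<exists>u::'a. \<forall>y. u * y = y \<and> y * u = y)"

definition rmul_set :: "'a::ring \<Rightarrow> 'a set" where
  "rmul_set x = {x * r | r. True}"

definition r_ann :: "'a::ring set \<Rightarrow> 'a set" where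
  "r_ann S = {a. \<forall>s\<in>S. s * a = 0}"

inductive_set add_closure :: "'a::ring set \<Rightarrow> 'a set" for S where
  zero: "0 \<in> add_closure S"
| base: "s \<in> S \<Longrightarrow> s \<in> add_closure S"
| add: "a \<in> add_closure S \<Longrightarrow> b \<in> add_closure S \<Longrightarrow> a + b \<in> add_closure S"
| neg: "a \<in> add_closure S \<Longrightarrow> - a \<in> add_closure S"

definition set_prod :: "'a::ring set \<Rightarrow> 'a set \<Rightarrow> 'a set" where
  "set_prod A B = add_closure {a * b | a b. a \<in> A \<and> b \<in> B}"

text \<open>Power I^n of a (one-sided) ideal I, for n \<ge> 1 (I^1 = I).\<close>
fun ideal_pow :: "'a::ring set \<Rightarrow> nat \<Rightarrow> 'a set" where
  "ideal_pow I 0 = UNIV"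
| "ideal_pow I (Suc 0) = I"
| "ideal_pow I (Suc (Suc n)) = set_prod (ideal_pow I (Suc n)) I"

definition gen_pq_baer :: "('a::ring \<Rightarrow> 'a) \<Rightarrow> bool" where
  "gen_pq_baer star \<longleftrightarrow>
     (\<forall>x::'a. \<exists>n\<ge>1. \<exists>e. is_projection star e \<and>
        r_ann (ideal_pow (rmul_set x) n) = rmul_set e)"

end

theory Submission
  imports Defs
begin

text \<open>Taking \<open>x = 0\<close> in the Baer condition gives a projection \<open>e\<^sub>0\<close> with \<open>e\<^sub>0R = R\<close>; by the
  involution \<open>e\<^sub>0\<close> is a two-sided unity. If \<open>r((xR)\<^sup>n) = eR\<close> for a projection \<open>e\<close>, then \<open>eR\<close>,
  being the annihilator of a right ideal, is a left ideal, so \<open>ere = re\<close>; applying the involution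
  gives \<open>ere = er\<close>, hence \<open>e\<close> is central. Finally, for a central projection \<open>f\<close> of a unital
  ring, \<open>(fR)\<^sup>n = fR\<close> and \<open>r(fR) = (1 - f)R\<close>, where \<open>1 - f\<close> is again a central projection;
  so both conditions just trade \<open>e\<close> for its complement \<open>1 - e\<close>.\<close>

lemma add_closure_subset:
  assumes "0 \<in> A" "\<And>a b. a \<in> A \<Longrightarrow> b \<in> A \<Longrightarrow> a + b \<in> A" "\<And>a. a \<in> A \<Longrightarrow> - a \<in> A" "S \<subseteq> A"
  shows "add_closure S \<subseteq> A"
proof
  fix y assume "y \<in> add_closure S"
  then show "y \<in> A"
    by induction (use assms in auto)
qed

definition right_closed :: "'a::ring set \<Rightarrow> bool" where
  "right_closed J \<longleftrightarrow> (\<forall>s\<in>J. \<forall>r. s * r \<in> J)"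

lemma right_closed_rmul_set: "right_closed (rmul_set x)"
  by (auto simp: right_closed_def rmul_set_def mult.assoc)

lemma right_closed_set_prod:
  assumes "right_closed B"
  shows "right_closed (set_prod A B)"
  unfolding right_closed_def set_prod_def
proof (intro ballI allI)
  fix s r assume "s \<in> add_closure {a * b |a b. a \<in> A \<and> b \<in> B}"
  then show "s * r \<in> add_closure {a * b |a b. a \<in> A \<and> b \<in> B}"
  proof induction
    case (base s)
    then obtain a b where "s = a * b" "a \<in> A" "b \<in> B" by blast
    moreover have "b * r \<in> B" using assms \<open>b \<in> B\<close> by (simp add: right_closed_def)
    ultimately show ?case by (intro add_closure.base) (auto simp: mult.assoc)
  qed (simp_all add: distrib_right add_closure.intros)
qed

lemma right_closed_ideal_pow:
  assumes "right_closed I" "n \<ge> 1"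
  shows "right_closed (ideal_pow I n)"
  using assms(2)
proof (induction n rule: nat_induct_at_least)
  case (Suc n)
  then obtain m where "n = Suc m" by (cases n) auto
  with assms(1) show ?case by (simp add: right_closed_set_prod)
qed (simp add: assms(1))

lemma r_ann_left_closed:
  assumes "right_closed J" "a \<in> r_ann J"
  shows "r * a \<in> r_ann J"
  using assms unfolding right_closed_def r_ann_def by (simp add: mult.assoc[symmetric])

lemma ideal_pow_rmul_set_zero: "n \<ge> 1 \<Longrightarrow> ideal_pow (rmul_set (0::'a::ring)) n \<subseteq> {0}"
proof (induction n rule: nat_induct_at_least)
  case (Suc n)
  then obtain m where "n = Suc m" by (cases n) auto
  moreover have "set_prod (ideal_pow (rmul_set (0::'a)) n) (rmul_set 0) \<subseteq> {0}"
    unfolding set_prod_def by (rule add_closure_subset) (auto simp: rmul_set_def)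
  ultimately show ?case by simp
qed (auto simp: rmul_set_def)

lemma r_ann_ideal_pow_rmul_set_zero: "n \<ge> 1 \<Longrightarrow> r_ann (ideal_pow (rmul_set (0::'a::ring)) n) = UNIV"
  using ideal_pow_rmul_set_zero unfolding r_ann_def by fastforce

lemma set_prod_rmul_set_idem:
  assumes "e * e = (e::'a::ring)"
  shows "set_prod (rmul_set e) (rmul_set e) = rmul_set e"
proof
  show "set_prod (rmul_set e) (rmul_set e) \<subseteq> rmul_set e"
    unfolding set_prod_def
  proof (rule add_closure_subset)
    show "0 \<in> rmul_set e"
      unfolding rmul_set_def by (metis (mono_tags) mem_Collect_eq mult_zero_right)
    show "a + b \<in> rmul_set e" if ab: "a \<in> rmul_set e" "b \<in> rmul_set e" for a b
    proof -
      obtain r s where "a = e * r" "b = e * s" using ab unfolding rmul_set_def by blast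
      then have "a + b = e * (r + s)" by (simp add: distrib_left)
      then show ?thesis unfolding rmul_set_def by blast
    qed
    show "- a \<in> rmul_set e" if a: "a \<in> rmul_set e" for a
    proof -
      obtain r where "a = e * r" using a unfolding rmul_set_def by blast
      then have "- a = e * (- r)" by simp
      then show ?thesis unfolding rmul_set_def by blast
    qed
    show "{a * b |a b. a \<in> rmul_set e \<and> b \<in> rmul_set e} \<subseteq> rmul_set e"
    proof
      fix y assume "y \<in> {a * b |a b. a \<in> rmul_set e \<and> b \<in> rmul_set e}"
      then obtain r s where "y = e * (r * (e * s))" unfolding rmul_set_def by (auto simp: mult.assoc)
      then show "y \<in> rmul_set e" unfolding rmul_set_def by blast
    qed
  qed
  show "rmul_set e \<subseteq> set_prod (rmul_set e) (rmul_set e)"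
  proof
    fix y assume "y \<in> rmul_set e"
    then obtain r where "y = e * r" unfolding rmul_set_def by blast
    then have "y = e * (e * r)" using assms by (simp add: mult.assoc[symmetric])
    moreover have "e \<in> rmul_set e" "e * r \<in> rmul_set e"
      using assms unfolding rmul_set_def by (metis (mono_tags) mem_Collect_eq)+
    ultimately show "y \<in> set_prod (rmul_set e) (rmul_set e)"
      unfolding set_prod_def by (intro add_closure.base) blast
  qed
qed

lemma ideal_pow_rmul_set_idem:
  assumes "e * e = (e::'a::ring)" "n \<ge> 1"
  shows "ideal_pow (rmul_set e) n = rmul_set e"
  using assms(2)
proof (induction n rule: nat_induct_at_least)
  case (Suc n)
  then obtain m where "n = Suc m" by (cases n) auto
  with Suc.IH show ?case by (simp add: set_prod_rmul_set_idem[OF assms(1)])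
qed simp

lemma r_ann_rmul_set_central_idem:
  assumes u: "\<And>y. u * y = y \<and> y * u = y" and "is_central e" "e * e = (e::'a::ring)"
  shows "r_ann (rmul_set e) = rmul_set (u - e)"
proof
  show "r_ann (rmul_set e) \<subseteq> rmul_set (u - e)"
  proof
    fix a assume "a \<in> r_ann (rmul_set e)"
    then have "e * u * a = 0" unfolding r_ann_def rmul_set_def by blast
    then have "a = (u - e) * a" using u by (simp add: left_diff_distrib)
    then show "a \<in> rmul_set (u - e)" unfolding rmul_set_def by blast
  qed
  show "rmul_set (u - e) \<subseteq> r_ann (rmul_set e)"
  proof
    fix a assume "a \<in> rmul_set (u - e)"
    then obtain b where b: "a = (u - e) * b" unfolding rmul_set_def by blast
    have "e * r * a = r * (e * (u - e)) * b" for r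
      using \<open>is_central e\<close> b unfolding is_central_def by (simp add: mult.assoc)
    moreover have "e * (u - e) = 0" using u \<open>e * e = e\<close> by (simp add: right_diff_distrib)
    ultimately show "a \<in> r_ann (rmul_set e)" unfolding r_ann_def rmul_set_def by auto
  qed
qed

lemma r_ann_ideal_pow_central_idem:
  assumes "\<And>y. u * y = y \<and> y * u = y" "is_central e" "e * e = (e::'a::ring)" "n \<ge> 1"
  shows "r_ann (ideal_pow (rmul_set e) n) = rmul_set (u - e)"
  using assms by (simp add: ideal_pow_rmul_set_idem r_ann_rmul_set_central_idem)

lemma involution_diff:
  assumes "is_involution star"
  shows "star (x - y) = star x - star y"
proof -
  have "star (x - y) + star y = star x"
    using assms unfolding is_involution_def by (metis diff_add_cancel)
  then show ?thesis by (simp add: eq_diff_eq)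
qed

lemma involution_unity:
  assumes "is_involution star" and u: "\<And>y. u * y = y \<and> y * u = y"
  shows "star u = u"
proof -
  have star_mult: "star (x * y) = star y * star x" and star_star: "star (star x) = x" for x y
    using assms(1) unfolding is_involution_def by auto
  have "star u * y = y" for y
  proof -
    have "star u * y = star (star y * u)" by (simp add: star_mult star_star)
    then show ?thesis using u star_star by simp
  qed
  then show ?thesis using u by metis
qed

lemma projection_complement:
  assumes "is_involution star" and u: "\<And>y. u * y = y \<and> y * u = y"
    and "is_projection star e" "is_central e"
  shows "is_projection star (u - e)" "is_central (u - e)"
proof -
  have ee: "e * e = e" "star e = e" using assms(3) unfolding is_projection_def by auto
  have "(u - e) * (u - e) = u - e"
    using u ee(1) by (simp add: left_diff_distrib right_diff_distrib)
  then show "is_projection star (u - e)"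
    unfolding is_projection_def
    using involution_diff[OF assms(1)] involution_unity[OF assms(1) u] ee(2) by simp
  show "is_central (u - e)"
    using u assms(4) unfolding is_central_def by (simp add: left_diff_distrib right_diff_distrib)
qed

lemma projection_central_if_left_closed:
  assumes "is_involution star" "is_projection star e"
    and left: "\<And>r. r * e \<in> rmul_set e"
  shows "is_central e"
proof -
  have ee: "e * e = e" "star e = e" using assms(2) unfolding is_projection_def by auto
  have ere: "e * r * e = r * e" for r
  proof -
    obtain t where "r * e = e * t" using left[of r] unfolding rmul_set_def by blast
    then show ?thesis using ee by (metis mult.assoc)
  qed
  have "e * r * e = e * r" for r
  proof -
    have "star (e * star r * e) = star (star r * e)" using ere[of "star r"] by simp
    then show ?thesis using assms(1) ee unfolding is_involution_def by (simp add: mult.assoc)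
  qed
  then show ?thesis unfolding is_central_def using ere by simp
qed

lemma gen_pq_baer_unity:
  fixes star :: "'a::ring \<Rightarrow> 'a"
  assumes "is_involution star" "gen_pq_baer star"
  obtains u where "\<And>y::'a. u * y = y \<and> y * u = y"
proof -
  obtain n e where "n \<ge> 1" "is_projection star e"
    and "r_ann (ideal_pow (rmul_set (0::'a)) n) = rmul_set e"
    using assms(2) unfolding gen_pq_baer_def by blast
  then have onto: "\<exists>t. y = e * t" for y
    using r_ann_ideal_pow_rmul_set_zero unfolding rmul_set_def by blast
  have ee: "e * e = e" "star e = e" using \<open>is_projection star e\<close> unfolding is_projection_def by auto
  have left: "e * y = y" for y using onto[of y] ee by (metis mult.assoc)
  have right: "y * e = y" for y
    using left[of "star y"] ee assms(1) unfolding is_involution_def by metis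
  show ?thesis by (rule that[of e]) (simp add: left right)
qed

lemma gen_pq_baer_central_annihilator:
  fixes star :: "'a::ring \<Rightarrow> 'a" and u :: 'a
  assumes "is_involution star" "gen_pq_baer star" and u: "\<And>y. u * y = y \<and> y * u = y"
  shows "\<exists>e. \<exists>n\<ge>1. is_projection star e \<and> is_central e \<and>
    r_ann (ideal_pow (rmul_set x) n) = r_ann (ideal_pow (rmul_set e) n)"
proof -
  obtain n e where n: "n \<ge> 1" and e: "is_projection star e"
    and h: "r_ann (ideal_pow (rmul_set x) n) = rmul_set e"
    using assms(2) unfolding gen_pq_baer_def by blast
  have "e \<in> rmul_set e" using e unfolding is_projection_def rmul_set_def by (metis (mono_tags) mem_Collect_eq)
  then have "r * e \<in> rmul_set e" for r
    using r_ann_left_closed[OF right_closed_ideal_pow[OF right_closed_rmul_set n]] h by blast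
  then have c: "is_central e" using projection_central_if_left_closed[OF assms(1) e] by blast
  define f where "f = u - e"
  have f: "is_projection star f" "is_central f"
    using projection_complement[OF assms(1) u e c] unfolding f_def by auto
  then have "r_ann (ideal_pow (rmul_set f) n) = rmul_set (u - f)"
    using r_ann_ideal_pow_central_idem[OF u _ _ n] unfolding is_projection_def by simp
  also have "u - f = e" unfolding f_def by simp
  finally show ?thesis using h n f by metis
qed

lemma central_annihilator_gen_pq_baer:
  fixes star :: "'a::ring \<Rightarrow> 'a" and u :: 'a
  assumes "is_involution star" and u: "\<And>y. u * y = y \<and> y * u = y"
    and A: "\<forall>x. \<exists>e. \<exists>n\<ge>1. is_projection star e \<and> is_central e \<and>
      r_ann (ideal_pow (rmul_set x) n) = r_ann (ideal_pow (rmul_set e) n)"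
  shows "gen_pq_baer star"
  unfolding gen_pq_baer_def
proof
  fix x :: 'a
  obtain e n where n: "n \<ge> 1" and e: "is_projection star e" "is_central e"
    and h: "r_ann (ideal_pow (rmul_set x) n) = r_ann (ideal_pow (rmul_set e) n)"
    using A by blast
  have "r_ann (ideal_pow (rmul_set x) n) = rmul_set (u - e)"
    using h e r_ann_ideal_pow_central_idem[OF u _ _ n] unfolding is_projection_def by simp
  with n projection_complement[OF assms(1) u e]
  show "\<exists>n\<ge>1. \<exists>e. is_projection star e \<and> r_ann (ideal_pow (rmul_set x) n) = rmul_set e"
    by blast
qed

theorem mainTheorem7:
  fixes star :: "'a::ring \<Rightarrow> 'a"
  assumes "is_involution star"
  shows "gen_pq_baer star \<longleftrightarrow>
    (has_unity TYPE('a) \<and>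
     (\<forall>x::'a. \<exists>e. \<exists>n\<ge>1. is_projection star e \<and> is_central e \<and>
        r_ann (ideal_pow (rmul_set x) n) = r_ann (ideal_pow (rmul_set e) n)))" (is "_ \<longleftrightarrow> ?unity \<and> ?central")
proof
  assume G: "gen_pq_baer star"
  then obtain u :: 'a where u: "\<And>y. u * y = y \<and> y * u = y"
    using gen_pq_baer_unity[OF assms] by blast
  then show "?unity \<and> ?central"
    unfolding has_unity_def using gen_pq_baer_central_annihilator[OF assms G u] by blast
next
  assume "?unity \<and> ?central"
  then show "gen_pq_baer star"
    unfolding has_unity_def using central_annihilator_gen_pq_baer[OF assms] by blast
qed

end
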